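(* $C_{\mathbb N}=C^0_{\mathbb N}=3$.
   Context: $\mathbb N=\{1,2,3,\dots\}$ is regarded as the infinite path graph with edges $\{j,j+1\}$, $j\in\mathbb N$, and graph distance $d(i,j)=|i-j|$. A measure $\mu$ is a weight function $\mu:\mathbb N\to(0,\infty)$, with $\mu(A)=\sum_{v\in A}\mu(v)$. Closed balls are $B(x,r)=\{y:d(x,y)\le r\}$. The doubling constant of $\mu$ is $C_\mu=\sup\{\mu(B(x,2k+1))/\mu(B(x,k)): x\in \mathbb N,\ k\in\{0,1,2,\dots\}\}$, and $\mu$ is doubling if $C_\mu<\infty$. $C_{\mathbb N}=\inf\{C_\mu:\mu\text{ doubling}\}$; $C^0_\mu=\sup_{x}\mu(B(x,1))/\mu(x)$ and $C^0_{\mathbb N}=\inf_\mu C^0_\mu$, the infimum over doubling measures. *)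

theory Defs
  imports Complex_Main "HOL-Library.Extended_Real"
begin

text \<open>The path graph on the vertex set {1,2,3,...} (a subset of nat), distance |i-j|.\<close>

definition ballN :: "nat \<Rightarrow> nat \<Rightarrow> nat set" where
  "ballN x r = {y. 1 \<le> y \<and> y \<le> x + r \<and> x \<le> y + r}"

text \<open>A measure: positive weights on the vertices {1,2,...} (the value at 0 is irrelevant).\<close>
definition is_measureN :: "(nat \<Rightarrow> real) \<Rightarrow> bool" where
  "is_measureN \<mu> = (\<forall>v\<ge>1. \<mu> v > 0)"

definition doubling_const :: "(nat \<Rightarrow> real) \<Rightarrow> ereal" where
  "doubling_const \<mu> =
     (SUP p \<in> {x. 1 \<le> x} \<times> (UNIV :: nat set).
        ereal (sum \<mu> (ballN (fst p) (2 * snd p + 1)) / sum \<mu> (ballN (fst p) (snd p))))"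

definition doublingN :: "(nat \<Rightarrow> real) \<Rightarrow> bool" where
  "doublingN \<mu> = (is_measureN \<mu> \<and> doubling_const \<mu> < \<infinity>)"

definition C_N :: ereal where
  "C_N = (INF \<mu> \<in> {\<mu>. doublingN \<mu>}. doubling_const \<mu>)"

definition C0 :: "(nat \<Rightarrow> real) \<Rightarrow> ereal" where
  "C0 \<mu> = (SUP x \<in> {x. 1 \<le> x}. ereal (sum \<mu> (ballN x 1) / \<mu> x))"

definition C0_N :: ereal where
  "C0_N = (INF \<mu> \<in> {\<mu>. doublingN \<mu>}. C0 \<mu>)"

end

theory Submission
  imports Defs
begin

text \<open>
  Lower bound: if \<open>\<mu>(B(x,1)) \<le> c \<mu>(x)\<close> for all \<open>x\<close>, the ratios \<open>r(n) = \<mu>(n+1)/\<mu>(n)\<close> satisfy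
  \<open>r(n+1) \<le> (c - 1) - 1/r(n) \<le> r(n) - (3 - c)\<close> because \<open>r + 1/r \<ge> 2\<close>; a positive sequence
  cannot decrease by a fixed positive amount forever, so \<open>c \<ge> 3\<close>. Hence \<open>C\<^sup>0\<^sub>\<mu> \<ge> 3\<close>, and
  \<open>C\<^sub>\<mu> \<ge> C\<^sup>0\<^sub>\<mu>\<close> (take \<open>k = 0\<close>). Upper bound: the counting measure has \<open>C\<^sub>\<mu> \<le> 3\<close>, since a
  ball of radius \<open>2k+1\<close> has at most \<open>3\<close> times as many points as the ball of radius \<open>k\<close>.
\<close>

lemma positive_sequence_decrement_nonpos:
  fixes r :: "nat \<Rightarrow> real"
  assumes pos: "\<And>n. 0 < r n" and step: "\<And>n. r (Suc n) \<le> r n - d"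
  shows "d \<le> 0"
proof (rule ccontr)
  assume "\<not> d \<le> 0"
  then obtain n where n: "r 0 < real n * d"
    using ex_less_of_nat_mult[of d "r 0"] by auto
  have linear_decay: "r m \<le> r 0 - real m * d" for m
  proof (induction m)
    case (Suc m)
    then show ?case using step[of m] by (simp add: algebra_simps)
  qed simp
  show False
    using linear_decay[of n] n pos[of n] by linarith
qed

lemma two_minus_le_inverse:
  fixes x :: real
  assumes "0 < x"
  shows "2 - x \<le> 1 / x"
proof -
  have "(2 - x) * x \<le> 1"
    using zero_le_power2[of "x - 1"] by (simp add: power2_eq_square algebra_simps)
  with assms show ?thesis by (simp add: le_divide_eq)
qed

lemma positive_sequence_three_term_bound:
  fixes a :: "nat \<Rightarrow> real"
  assumes pos: "\<And>n. 0 < a n"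
    and bound: "\<And>n. a n + a (Suc n) + a (Suc (Suc n)) \<le> c * a (Suc n)"
  shows "3 \<le> c"
proof -
  define r where "r n = a (Suc n) / a n" for n
  have r_pos: "0 < r n" for n
    using pos unfolding r_def by simp
  have r_step: "r (Suc n) \<le> r n - (3 - c)" for n
  proof -
    have "r (Suc n) \<le> (c - 1) - a n / a (Suc n)"
      using bound[of n] pos[of "Suc n"] unfolding r_def by (simp add: field_simps)
    also have "a n / a (Suc n) = 1 / r n"
      unfolding r_def by simp
    also have "(c - 1) - 1 / r n \<le> (c - 1) - (2 - r n)"
      using two_minus_le_inverse[OF r_pos[of n]] by linarith
    finally show ?thesis by simp
  qed
  show ?thesis
    using positive_sequence_decrement_nonpos[of r, OF r_pos r_step] by simp
qed

lemma ballN_eq_atLeastAtMost: "ballN x r = {max 1 (x - r) .. x + r}"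
  unfolding ballN_def by auto

lemma ballN_0: "1 \<le> x \<Longrightarrow> ballN x 0 = {x}"
  unfolding ballN_def by auto

lemma ballN_1_Suc: "ballN (Suc n) 1 = {n, Suc n, Suc (Suc n)} - {0}"
  unfolding ballN_def by auto

lemma three_le_C0:
  assumes "is_measureN \<mu>"
  shows "3 \<le> C0 \<mu>"
proof (rule ccontr)
  assume "\<not> 3 \<le> C0 \<mu>"
  then have "C0 \<mu> < 3" by simp
  then obtain c where C0_less: "C0 \<mu> < ereal c" and "ereal c < 3"
    using ereal_dense2 by blast
  have pos: "0 < \<mu> (Suc n)" for n
    using assms unfolding is_measureN_def by simp
  have ball_bound: "sum \<mu> (ballN x 1) \<le> c * \<mu> x" if "1 \<le> x" for x
  proof -
    have "ereal (sum \<mu> (ballN x 1) / \<mu> x) \<le> C0 \<mu>"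
      unfolding C0_def using that by (intro SUP_upper) simp
    also note C0_less
    finally have "sum \<mu> (ballN x 1) / \<mu> x \<le> c" by simp
    with that pos show ?thesis by (cases x) (simp_all add: divide_le_eq)
  qed
  have "\<mu> (Suc n) + \<mu> (Suc (Suc n)) + \<mu> (Suc (Suc (Suc n))) \<le> c * \<mu> (Suc (Suc n))" for n
    using ball_bound[of "Suc (Suc n)"] unfolding ballN_1_Suc by (simp add: insert_Diff_if)
  with pos have "3 \<le> c"
    by (rule positive_sequence_three_term_bound[of "\<lambda>n. \<mu> (Suc n)"])
  with \<open>ereal c < 3\<close> show False by simp
qed

lemma C0_le_doubling_const: "C0 \<mu> \<le> doubling_const \<mu>"
  unfolding C0_def doubling_const_def
proof (rule SUP_least)
  fix x :: nat assume x: "x \<in> {x. 1 \<le> x}"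
  let ?ratio = "\<lambda>p. ereal (sum \<mu> (ballN (fst p) (2 * snd p + 1)) / sum \<mu> (ballN (fst p) (snd p)))"
  have "ereal (sum \<mu> (ballN x 1) / \<mu> x) = ?ratio (x, 0)"
    using x by (simp add: ballN_0)
  also have "\<dots> \<le> (SUP p \<in> {x. 1 \<le> x} \<times> UNIV. ?ratio p)"
    using x by (intro SUP_upper) auto
  finally show "ereal (sum \<mu> (ballN x 1) / \<mu> x) \<le> \<dots>" .
qed

lemma card_ballN_double_le:
  assumes "1 \<le> x"
  shows "card (ballN x (2 * k + 1)) \<le> 3 * card (ballN x k)"
  using assms unfolding ballN_eq_atLeastAtMost by (simp add: max_def split: if_splits) arith

lemma doubling_const_counting_le_3: "doubling_const (\<lambda>_. 1) \<le> 3"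
  unfolding doubling_const_def
proof (rule SUP_least)
  fix p :: "nat \<times> nat" assume "p \<in> {x. 1 \<le> x} \<times> UNIV"
  then obtain x k where p: "p = (x, k)" and x: "1 \<le> x" by auto
  have "x \<in> ballN x k"
    using x unfolding ballN_def by simp
  then have "0 < card (ballN x k)"
    unfolding ballN_eq_atLeastAtMost by (simp add: card_gt_0_iff)
  with card_ballN_double_le[OF x, of k]
  have "real (card (ballN x (2 * k + 1))) / real (card (ballN x k)) \<le> 3"
    by (simp add: divide_le_eq)
  then show "ereal (sum (\<lambda>_. 1) (ballN (fst p) (2 * snd p + 1))
      / sum (\<lambda>_. 1) (ballN (fst p) (snd p))) \<le> 3"
    unfolding p by simp
qed

lemma doublingN_counting: "doublingN (\<lambda>_. 1)"
  unfolding doublingN_def is_measureN_def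
proof
  show "doubling_const (\<lambda>_. 1) < \<infinity>"
    using doubling_const_counting_le_3 by (rule order.strict_trans1) simp
qed simp

theorem theorem4p3:
  shows "C_N = 3 \<and> C0_N = 3"
proof
  have lower: "3 \<le> C0 \<mu>" "3 \<le> doubling_const \<mu>" if "doublingN \<mu>" for \<mu>
  proof -
    show "3 \<le> C0 \<mu>"
      using that three_le_C0 unfolding doublingN_def by blast
    then show "3 \<le> doubling_const \<mu>"
      using C0_le_doubling_const by (rule order_trans)
  qed
  have "C_N \<le> doubling_const (\<lambda>_. 1)" "C0_N \<le> C0 (\<lambda>_. 1)"
    unfolding C_N_def C0_N_def using doublingN_counting by (auto intro: INF_lower)
  moreover have "C0 (\<lambda>_. 1) \<le> 3"
    using C0_le_doubling_const doubling_const_counting_le_3 by (rule order_trans)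
  moreover have "3 \<le> C_N" "3 \<le> C0_N"
    unfolding C_N_def C0_N_def using lower by (auto intro: INF_greatest)
  ultimately show "C_N = 3" "C0_N = 3"
    using doubling_const_counting_le_3 by (auto intro: antisym)
qed

end
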